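(* Let $\{A_1,\ldots,A_q\}$ be a collection of sets, each of size at least one, such that all but at most one of them have size exactly $2$, and each element appears in at most two of the sets. Then $\{A_1,\ldots,A_q\}$ has a system of distinct representatives, i.e., there exist pairwise distinct elements $a_1,\ldots,a_q$ with $a_i\in A_i$ for all $i\in[q]$. *)

theory Defs
  imports Main
begin

end

theory Submission
  imports Defs
begin

text \<open>Pick an element \<open>x\<close> of the exceptional set \<open>A k\<close>
  (or of any set) as its representative and delete \<open>k\<close> and \<open>x\<close>. Since \<open>x\<close> lies in at most
  one further set, at most one of the remaining sets shrinks, and only to size one; so
  the smaller family again satisfies the hypotheses, with that set as the new exception.\<close>

lemma degree_le_two_unique_other:
  assumes "finite I" and "card {i\<in>I. x \<in> A i} \<le> 2"
    and "k \<in> I" "x \<in> A k"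
    and "i \<in> I - {k}" "x \<in> A i" "i' \<in> I - {k}" "x \<in> A i'"
  shows "i = i'"
proof (rule ccontr)
  assume "i \<noteq> i'"
  then have "card {k, i, i'} = 3" using assms(5,7) by auto
  moreover have "{k, i, i'} \<subseteq> {i\<in>I. x \<in> A i}" using assms by auto
  ultimately have "3 \<le> card {i\<in>I. x \<in> A i}"
    using assms(1) card_mono[of "{i\<in>I. x \<in> A i}" "{k, i, i'}"] by simp
  with assms(2) show False by linarith
qed

lemma sdr_insert:
  assumes "inj_on a I" "\<forall>i\<in>I. a i \<in> A i - {x}" "k \<notin> I" "x \<in> A k"
  shows "inj_on (a(k := x)) (insert k I) \<and> (\<forall>i\<in>insert k I. (a(k := x)) i \<in> A i)"
proof
  show "inj_on (a(k := x)) (insert k I)"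
    using assms by (simp add: inj_on_fun_updI) (fastforce simp: inj_on_def)
  show "\<forall>i\<in>insert k I. (a(k := x)) i \<in> A i" using assms by auto
qed

lemma remove_representative_almost_two:
  assumes fin: "finite I" and degree: "\<forall>y. card {i\<in>I. y \<in> A i} \<le> 2"
    and two: "\<forall>i\<in>I - {k}. card (A i) = 2"
    and k: "k \<in> I" "x \<in> A k"
  obtains j where "\<forall>i\<in>I - {k}. i \<noteq> j \<longrightarrow> card (A i - {x}) = 2"
proof (cases "\<exists>i\<in>I - {k}. x \<in> A i")
  case True
  then obtain j where j: "j \<in> I - {k}" "x \<in> A j" by blast
  have "x \<notin> A i" if "i \<in> I - {k}" "i \<noteq> j" for i
    using degree_le_two_unique_other[OF fin _ k that(1) _ j] degree that(2) by blast
  with two have "\<forall>i\<in>I - {k}. i \<noteq> j \<longrightarrow> card (A i - {x}) = 2" by simp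
  then show ?thesis by (rule that)
next
  case False
  with two show ?thesis by (intro that[of k]) simp
qed

lemma sdr_if_almost_two:
  fixes A :: "'i \<Rightarrow> 'a set"
  assumes "finite I"
    and "\<forall>i\<in>I. A i \<noteq> {}"
    and "\<forall>i\<in>I. i \<noteq> j \<longrightarrow> card (A i) = 2"
    and "\<forall>y. card {i\<in>I. y \<in> A i} \<le> 2"
  shows "\<exists>a. inj_on a I \<and> (\<forall>i\<in>I. a i \<in> A i)"
  using assms
proof (induction "card I" arbitrary: I A j)
  case 0
  then show ?case by auto
next
  case (Suc n)
  obtain k where k: "k \<in> I" "\<forall>i\<in>I - {k}. card (A i) = 2"
  proof (cases "j \<in> I")
    case True
    with Suc.prems(3) show ?thesis by (intro that[of j]) auto
  next
    case False
    obtain k where "k \<in> I" using Suc.hyps(2) by fastforce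
    with False Suc.prems(3) show ?thesis by (intro that[of k]) auto
  qed
  obtain x where x: "x \<in> A k" using Suc.prems(2) k(1) by blast
  obtain j' where j': "\<forall>i\<in>I - {k}. i \<noteq> j' \<longrightarrow> card (A i - {x}) = 2"
    using remove_representative_almost_two[OF Suc.prems(1,4) k(2) k(1) x] .
  have nonempty': "\<forall>i\<in>I - {k}. A i - {x} \<noteq> {}"
  proof
    fix i assume i: "i \<in> I - {k}"
    have "card (A i - {x}) \<noteq> 0" using k(2) i by (simp add: card_Diff_singleton_if)
    then show "A i - {x} \<noteq> {}" by force
  qed
  have degree': "\<forall>y. card {i\<in>I - {k}. y \<in> A i - {x}} \<le> 2"
  proof
    fix y
    have "card {i\<in>I - {k}. y \<in> A i - {x}} \<le> card {i\<in>I. y \<in> A i}"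
      using Suc.prems(1) by (intro card_mono) auto
    then show "card {i\<in>I - {k}. y \<in> A i - {x}} \<le> 2" using Suc.prems(4) by (meson le_trans)
  qed
  have "n = card (I - {k})" using Suc.hyps(2) k(1) by simp
  from Suc.hyps(1)[OF this _ nonempty' j' degree'] Suc.prems(1)
  obtain a where "inj_on a (I - {k})" "\<forall>i\<in>I - {k}. a i \<in> A i - {x}" by auto
  moreover have "insert k (I - {k}) = I" using k(1) by blast
  ultimately show ?case using sdr_insert[of a "I - {k}" A x k] x by auto
qed

theorem lemma42:
  fixes A :: "nat \<Rightarrow> 'a set" and q :: nat
  assumes nonempty: "\<And>i. i < q \<Longrightarrow> A i \<noteq> {}"
    and almost_two: "\<exists>j. \<forall>i<q. i \<noteq> j \<longrightarrow> card (A i) = 2"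
    and degree: "\<And>x. card {i. i < q \<and> x \<in> A i} \<le> 2"
  shows "\<exists>a. inj_on a {..<q} \<and> (\<forall>i<q. a i \<in> A i)"
proof -
  obtain j where j: "\<forall>i<q. i \<noteq> j \<longrightarrow> card (A i) = 2" using almost_two by blast
  have "\<forall>x. card {i\<in>{..<q}. x \<in> A i} \<le> 2" using degree by (simp add: lessThan_def)
  with nonempty j have "\<exists>a. inj_on a {..<q} \<and> (\<forall>i\<in>{..<q}. a i \<in> A i)"
    by (intro sdr_if_almost_two[where j = j]) auto
  then show ?thesis by auto
qed

end
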